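(* For all integers $n,r,\lambda\ge1$, $l\ge0$, and every $\mathbf{p}=(p_1,p_2,p_3,p_4)$ with $p_i\in(0,1)$, $\sum_ip_i=1$, write $a=\lfloor p_1n\rfloor$, $u=\lfloor p_2n\rfloor$, $c=\lfloor p_3n\rfloor$, $g=n-a-u-c$, and let \[ \bar l_0=\min\big(\min(a,u)+g,\ \min(c,g)+u\big). \] Then $\bar{s}_{\mathbf{p},\lambda}^{[r]}(n,l)= s_\lambda^{[r]}(n,l)$ if $l\le\bar l_0$ and $\bar{s}_{\mathbf{p},\lambda}^{[r]}(n,l)=0$ otherwise; consequently $\bar{s}_{\mathbf{p},\lambda}^{[r]}(n)= \sum_{l=0}^{\bar l_0} s_\lambda^{[r]}(n,l)$.
   Context: A diagram on $n$ vertices is a graph on $\{1,\dots,n\}$ whose edges (arcs) are pairs $(i,j)$, $i<j$, of length $j-i$. For $\lambda\ge1$, an RNA secondary structure of length $n$ with minimum arc-length $\lambda$ is a diagram with every arc of length $\ge\lambda$, no two arcs sharing an endpoint, and no two arcs $(i_1,j_1),(i_2,j_2)$ with $i_1<i_2<j_1<j_2$. A stack of length $t$ is a maximal sequence of arcs $((i,j),(i+1,j-1),\ldots,(i+t-1,j-t+1))$; the structure is $r$-canonical if all stacks have length $\ge r$. $s_{\lambda}^{[r]}(n,l)$ counts such structures of length $n$ with $l$ arcs. Sequences are over $\{\mathbf{A},\mathbf{U},\mathbf{C},\mathbf{G}\}$ with allowed base pairs $\{\mathbf A,\mathbf U\}$, $\{\mathbf C,\mathbf G\}$ (Watson–Crick)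 and $\{\mathbf U,\mathbf G\}$ (wobble), each in either order; a sequence $x_1\cdots x_n$ is compatible with $S$ if $(x_i,x_j)$ is allowed for every arc $(i,j)$. $\bar{s}_{\mathbf{p},\lambda}^{[r]}(n,l)$ (resp. $\bar{s}_{\mathbf{p},\lambda}^{[r]}(n)$) is the number of $r$-canonical secondary structures of length $n$ with minimum arc-length $\lambda$ having $l$ arcs (resp. any number of arcs) that admit a compatible sequence with exactly $a$ letters $\mathbf A$, $u$ letters $\mathbf U$, $c$ letters $\mathbf C$ and $g$ letters $\mathbf G$. *)

theory Defs
  imports Complex_Main
begin

definition is_diagram :: "nat \<Rightarrow> (nat \<times> nat) set \<Rightarrow> bool" where
  "is_diagram n S \<longleftrightarrow> (\<forall>(i,j)\<in>S. 1 \<le> i \<and> i < j \<and> j \<le> n)"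

definition sec_struct :: "nat \<Rightarrow> nat \<Rightarrow> (nat \<times> nat) set \<Rightarrow> bool" where
  "sec_struct n lam S \<longleftrightarrow> is_diagram n S
     \<and> (\<forall>(i,j)\<in>S. j - i \<ge> lam)
     \<and> (\<forall>(i1,j1)\<in>S. \<forall>(i2,j2)\<in>S. (i1,j1) \<noteq> (i2,j2) \<longrightarrow>
           i1 \<noteq> i2 \<and> i1 \<noteq> j2 \<and> j1 \<noteq> i2 \<and> j1 \<noteq> j2)
     \<and> (\<forall>(i1,j1)\<in>S. \<forall>(i2,j2)\<in>S. \<not> (i1 < i2 \<and> i2 < j1 \<and> j1 < j2))"

text \<open>r-canonical: every stack (maximal sequence (i,j),(i+1,j-1),...) has length at least r.
  A stack starts at an arc (i,j) such that (i-1,j+1) is not an arc; its length is at least r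
  iff (i+k,j-k) is an arc for all k < r.\<close>
definition r_canonical :: "nat \<Rightarrow> (nat \<times> nat) set \<Rightarrow> bool" where
  "r_canonical r S \<longleftrightarrow>
     (\<forall>(i,j)\<in>S. (i - 1, j + 1) \<notin> S \<or> i = 0 \<longrightarrow> (\<forall>k<r. (i + k, j - k) \<in> S))"

definition rna_struct :: "nat \<Rightarrow> nat \<Rightarrow> nat \<Rightarrow> (nat \<times> nat) set \<Rightarrow> bool" where
  "rna_struct n lam r S \<longleftrightarrow> sec_struct n lam S \<and> r_canonical r S"

definition s_count :: "nat \<Rightarrow> nat \<Rightarrow> nat \<Rightarrow> nat \<Rightarrow> nat" where
  "s_count lam r n l = card {S. rna_struct n lam r S \<and> card S = l}"

datatype base = A | U | C | G

definition allowed_pair :: "base \<Rightarrow> base \<Rightarrow> bool" where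
  "allowed_pair x y \<longleftrightarrow> {x,y} = {A,U} \<or> {x,y} = {C,G} \<or> {x,y} = {U,G}"

definition compatible :: "(nat \<Rightarrow> base) \<Rightarrow> (nat \<times> nat) set \<Rightarrow> bool" where
  "compatible x S \<longleftrightarrow> (\<forall>(i,j)\<in>S. allowed_pair (x i) (x j))"

definition letter_count :: "nat \<Rightarrow> (nat \<Rightarrow> base) \<Rightarrow> base \<Rightarrow> nat" where
  "letter_count n x b = card {i\<in>{1..n}. x i = b}"

definition cnt_a :: "real \<Rightarrow> nat \<Rightarrow> nat" where "cnt_a p1 n = nat \<lfloor>p1 * real n\<rfloor>"
definition cnt_u :: "real \<Rightarrow> nat \<Rightarrow> nat" where "cnt_u p2 n = nat \<lfloor>p2 * real n\<rfloor>"
definition cnt_c :: "real \<Rightarrow> nat \<Rightarrow> nat" where "cnt_c p3 n = nat \<lfloor>p3 * real n\<rfloor>"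
definition cnt_g :: "real \<Rightarrow> real \<Rightarrow> real \<Rightarrow> nat \<Rightarrow> nat" where
  "cnt_g p1 p2 p3 n = n - cnt_a p1 n - cnt_u p2 n - cnt_c p3 n"

definition admits_seq :: "real \<Rightarrow> real \<Rightarrow> real \<Rightarrow> nat \<Rightarrow> (nat \<times> nat) set \<Rightarrow> bool" where
  "admits_seq p1 p2 p3 n S \<longleftrightarrow> (\<exists>x. compatible x S
      \<and> letter_count n x A = cnt_a p1 n \<and> letter_count n x U = cnt_u p2 n
      \<and> letter_count n x C = cnt_c p3 n \<and> letter_count n x G = cnt_g p1 p2 p3 n)"

text \<open>bar s_{p,lambda}^[r](n,l) and bar s_{p,lambda}^[r](n); p = (p1,p2,p3,p4), and p4 is
  determined by the others since a,u,c,g only depend on p1,p2,p3.\<close>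
definition sbar_count :: "real \<Rightarrow> real \<Rightarrow> real \<Rightarrow> real \<Rightarrow> nat \<Rightarrow> nat \<Rightarrow> nat \<Rightarrow> nat \<Rightarrow> nat" where
  "sbar_count p1 p2 p3 p4 lam r n l =
     card {S. rna_struct n lam r S \<and> card S = l \<and> admits_seq p1 p2 p3 n S}"

definition sbar_total :: "real \<Rightarrow> real \<Rightarrow> real \<Rightarrow> real \<Rightarrow> nat \<Rightarrow> nat \<Rightarrow> nat \<Rightarrow> nat" where
  "sbar_total p1 p2 p3 p4 lam r n =
     card {S. rna_struct n lam r S \<and> admits_seq p1 p2 p3 n S}"

end

theory Submission
  imports Defs
begin

text \<open>The allowed pairs form the path A--U--G--C, whose minimal vertex covers are {A,G}, {U,C}
  and {U,G}. Every arc of a structure with a compatible sequence has an endpoint labelled from each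
  cover, and the endpoints of distinct arcs are distinct, so the number of arcs is at most the
  smallest cover count; this minimum is exactly l0. Conversely, if the number of arcs is at most all
  three cover counts, the arcs can be labelled one at a time greedily, preferring A-U and C-G and
  using U-G only when neither of those is available, and the unpaired positions then absorb the
  remaining letters. Hence admitting a sequence depends only on the number of arcs, and both
  counting statements follow.\<close>

lemma UNIV_base: "UNIV = {A, U, C, G}"
  by (auto intro: base.exhaust)

lemma finite_UNIV_base: "finite (UNIV :: base set)"
  by (simp add: UNIV_base)

lemma all_base: "(\<forall>b. P b) \<longleftrightarrow> P A \<and> P U \<and> P C \<and> P G"
  by (metis base.exhaust)

lemma sum_UNIV_base: "sum k UNIV = k A + k U + k C + k G"
  unfolding UNIV_base by (simp add: add.assoc)

definition matching_on :: "'a set \<Rightarrow> ('a \<times> 'a) set \<Rightarrow> bool" where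
  "matching_on V S \<longleftrightarrow> (\<forall>(i,j)\<in>S. i \<in> V \<and> j \<in> V \<and> i \<noteq> j)
     \<and> (\<forall>s\<in>S. \<forall>t\<in>S. s \<noteq> t \<longrightarrow> {fst s, snd s} \<inter> {fst t, snd t} = {})"

lemma sec_struct_matching_on: "sec_struct n lam S \<Longrightarrow> matching_on {1..n} S"
  unfolding sec_struct_def matching_on_def is_diagram_def by fastforce

lemma matching_on_subset: "matching_on V S \<Longrightarrow> S \<subseteq> V \<times> V"
  unfolding matching_on_def by auto

lemma matching_on_finite: "finite V \<Longrightarrow> matching_on V S \<Longrightarrow> finite S"
  using matching_on_subset finite_subset by blast

lemma matching_on_remove_arc:
  assumes m: "matching_on V (insert (i, j) S)" and "(i, j) \<notin> S"
  shows "matching_on (V - {i, j}) S"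
proof -
  have disj: "\<forall>s\<in>insert (i, j) S. \<forall>t\<in>insert (i, j) S. s \<noteq> t \<longrightarrow> {fst s, snd s} \<inter> {fst t, snd t} = {}"
    using m unfolding matching_on_def by blast
  have "{i', j'} \<inter> {i, j} = {}" if "(i', j') \<in> S" for i' j'
    using disj[rule_format, of "(i', j')" "(i, j)"] that assms(2) by auto
  moreover have "\<forall>(i', j')\<in>S. i' \<in> V \<and> j' \<in> V \<and> i' \<noteq> j'"
    using m unfolding matching_on_def by auto
  ultimately show ?thesis
    using disj unfolding matching_on_def by auto
qed

lemma card_filter_insert:
  assumes "finite V" and "v \<notin> V"
  shows "card {w \<in> insert v V. P w} = card {w \<in> V. P w} + (if P v then 1 else 0)"
proof -
  have "{w \<in> insert v V. P w} = (if P v then insert v {w \<in> V. P w} else {w \<in> V. P w})"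
    by auto
  then show ?thesis
    using assms by simp
qed

lemma exists_labelling_with_counts:
  fixes k :: "'b \<Rightarrow> nat"
  assumes "finite (UNIV :: 'b set)" and "finite V" and "sum k UNIV = card V"
  shows "\<exists>f. \<forall>b. card {v \<in> V. f v = b} = k b"
  using assms(2,3)
proof (induction V arbitrary: k rule: finite_induct)
  case empty
  then show ?case
    using assms(1) by simp
next
  case (insert v V)
  then have "sum k UNIV \<noteq> 0"
    by simp
  then obtain b0 where "0 < k b0"
    using sum.not_neutral_contains_not_neutral by blast
  define k' where "k' = k(b0 := k b0 - 1)"
  have "sum k' UNIV = k' b0 + sum k' (UNIV - {b0})"
    using assms(1) by (rule sum.remove) simp
  also have "\<dots> = (k b0 - 1) + sum k (UNIV - {b0})"
    unfolding k'_def by (auto intro!: sum.cong)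
  also have "\<dots> = sum k UNIV - 1"
    using \<open>0 < k b0\<close> sum.remove[OF assms(1), of b0 k] by simp
  also have "\<dots> = card V"
    using insert by simp
  finally obtain f where f: "\<forall>b. card {w \<in> V. f w = b} = k' b"
    using insert.IH by blast
  have "card {w \<in> insert v V. (f(v := b0)) w = b} = k b" for b
  proof -
    have "card {w \<in> insert v V. (f(v := b0)) w = b}
        = card {w \<in> V. (f(v := b0)) w = b} + (if b0 = b then 1 else 0)"
      using insert.hyps by (subst card_filter_insert) auto
    also have "{w \<in> V. (f(v := b0)) w = b} = {w \<in> V. f w = b}"
      using insert.hyps(2) by auto
    finally show ?thesis
      using f \<open>0 < k b0\<close> by (cases "b = b0") (simp_all add: k'_def)
  qed
  then show ?case
    by blast
qed

definition arc_capacity :: "(base \<Rightarrow> nat) \<Rightarrow> nat" where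
  "arc_capacity k = min (k A + k G) (min (k U + k C) (k U + k G))"

lemma allowed_pair_covers:
  assumes "allowed_pair p q"
  shows "p \<in> {A, G} \<or> q \<in> {A, G}" and "p \<in> {U, C} \<or> q \<in> {U, C}" and "p \<in> {U, G} \<or> q \<in> {U, G}"
  using assms by (cases p; cases q; simp add: allowed_pair_def doubleton_eq_iff)+

lemma card_le_cover_count:
  assumes m: "matching_on V S" and "finite V" and comp: "compatible lab S"
    and cover: "\<And>p q. allowed_pair p q \<Longrightarrow> p \<in> B \<or> q \<in> B"
  shows "card S \<le> card {v \<in> V. lab v \<in> B}"
proof -
  define e where "e s = (if lab (fst s) \<in> B then fst s else snd s)" for s
  have "inj_on e S"
  proof (rule inj_onI)
    fix s t assume "s \<in> S" "t \<in> S" "e s = e t"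
    then show "s = t"
      using m unfolding matching_on_def e_def by (auto split: if_splits)
  qed
  moreover have "e ` S \<subseteq> {v \<in> V. lab v \<in> B}"
  proof
    fix v assume "v \<in> e ` S"
    then obtain i j where ij: "(i, j) \<in> S" "v = e (i, j)"
      by auto
    then have "allowed_pair (lab i) (lab j)"
      using comp unfolding compatible_def by auto
    then have "lab i \<in> B \<or> lab j \<in> B"
      by (rule cover)
    then show "v \<in> {v \<in> V. lab v \<in> B}"
      using m ij unfolding matching_on_def e_def by auto
  qed
  ultimately show ?thesis
    using \<open>finite V\<close> by (intro card_inj_on_le) auto
qed

lemma card_le_arc_capacity:
  assumes "matching_on V S" and "finite V" and "compatible lab S"
  shows "card S \<le> arc_capacity (\<lambda>b. card {v \<in> V. lab v = b})"
proof -
  have count2: "card {v \<in> V. lab v = b1 \<or> lab v = b2} = card {v \<in> V. lab v = b1} + card {v \<in> V. lab v = b2}"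
    if "b1 \<noteq> b2" for b1 b2
  proof -
    have "{v \<in> V. lab v = b1 \<or> lab v = b2} = {v \<in> V. lab v = b1} \<union> {v \<in> V. lab v = b2}"
      by auto
    then show ?thesis
      using that \<open>finite V\<close> by (simp add: card_Un_disjoint disjoint_iff)
  qed
  show ?thesis
    unfolding arc_capacity_def
    using card_le_cover_count[OF assms allowed_pair_covers(1)]
      card_le_cover_count[OF assms allowed_pair_covers(2)]
      card_le_cover_count[OF assms allowed_pair_covers(3)]
    by (simp add: count2)
qed

lemma arc_capacity_remove_pair:
  assumes "Suc l \<le> arc_capacity k"
  obtains p q where "allowed_pair p q" "p \<noteq> q" "0 < k p" "0 < k q"
    "l \<le> arc_capacity (k(p := k p - 1, q := k q - 1))"
proof -
  have ap: "allowed_pair A U" "allowed_pair C G" "allowed_pair U G"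
    by (simp_all add: allowed_pair_def)
  consider "0 < k A" "0 < k U" | "0 < k C" "0 < k G" | "k A = 0 \<or> k U = 0" "k C = 0 \<or> k G = 0"
    by blast
  then show thesis
  proof cases
    case 1
    with assms show thesis
      by (intro that[OF ap(1)]) (auto simp: arc_capacity_def)
  next
    case 2
    with assms show thesis
      by (intro that[OF ap(2)]) (auto simp: arc_capacity_def)
  next
    case 3
    \<comment> \<open>then the bound forces both U and G to occur, with U + G > l + 1\<close>
    with assms show thesis
      by (intro that[OF ap(3)]) (auto simp: arc_capacity_def)
  qed
qed

lemma exists_compatible_labelling:
  assumes "matching_on V S" and "finite V"
    and "sum k UNIV = card V" and "card S \<le> arc_capacity k"
  shows "\<exists>lab. compatible lab S \<and> (\<forall>b. card {v \<in> V. lab v = b} = k b)"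
  using matching_on_finite[OF assms(2,1)] assms
proof (induction S arbitrary: V k rule: finite_induct)
  case empty
  then show ?case
    using exists_labelling_with_counts[OF finite_UNIV_base, of V k] by (simp add: compatible_def)
next
  case (insert s S)
  obtain i j where s: "s = (i, j)"
    by fastforce
  have ij: "i \<in> V" "j \<in> V" "i \<noteq> j"
    using insert.prems(1) unfolding matching_on_def s by auto
  have "Suc (card S) \<le> arc_capacity k"
    using insert.hyps insert.prems(4) by simp
  then obtain p q where pq: "allowed_pair p q" "p \<noteq> q" "0 < k p" "0 < k q"
    and cap: "card S \<le> arc_capacity (k(p := k p - 1, q := k q - 1))"
    by (rule arc_capacity_remove_pair)
  define k' where "k' = k(p := k p - 1, q := k q - 1)"
  define V' where "V' = V - {i, j}"
  have k: "k b = k' b + (if p = b then 1 else 0) + (if q = b then 1 else 0)" for b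
    using pq unfolding k'_def by auto
  have "sum k UNIV = sum k' UNIV + 2"
    using pq(2) by (cases p; cases q) (simp_all add: k sum_UNIV_base)
  then have sum_k': "sum k' UNIV = card V'"
    using ij insert.prems(2,3) unfolding V'_def by simp
  have m': "matching_on V' S"
    using matching_on_remove_arc[of V i j S] insert.prems(1) insert.hyps(2)
    unfolding s V'_def by simp
  have "finite V'"
    using insert.prems(2) unfolding V'_def by simp
  from insert.IH[OF m' this sum_k'] cap
  obtain lab where lab: "compatible lab S" "\<forall>b. card {v \<in> V'. lab v = b} = k' b"
    unfolding k'_def by blast
  define lab' where "lab' = lab(i := p, j := q)"
  have lab'_ij: "lab' i = p" "lab' j = q"
    using ij(3) unfolding lab'_def by simp_all
  have lab'_V': "lab' v = lab v" if "v \<in> V'" for v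
    using that unfolding lab'_def V'_def by simp
  have "allowed_pair (lab' i') (lab' j')" if "(i', j') \<in> S" for i' j'
    using lab(1) that m' lab'_V' unfolding compatible_def matching_on_def by fastforce
  then have "compatible lab' (insert s S)"
    using pq(1) lab'_ij unfolding compatible_def s by auto
  moreover have "card {v \<in> V. lab' v = b} = k b" for b
  proof -
    have V: "V = insert i (insert j V')" and i: "i \<notin> insert j V'" and j: "j \<notin> V'"
      using ij unfolding V'_def by auto
    have "card {v \<in> V. lab' v = b}
        = card {v \<in> V'. lab' v = b} + (if p = b then 1 else 0) + (if q = b then 1 else 0)"
      unfolding V card_filter_insert[OF finite.insertI[OF \<open>finite V'\<close>] i]
        card_filter_insert[OF \<open>finite V'\<close> j] lab'_ij by simp
    also have "{v \<in> V'. lab' v = b} = {v \<in> V'. lab v = b}"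
      using lab'_V' by auto
    finally show ?thesis
      using lab(2) k by simp
  qed
  ultimately show ?case
    by blast
qed

lemma exists_compatible_labelling_iff:
  assumes "matching_on V S" and "finite V" and "sum k UNIV = card V"
  shows "(\<exists>lab. compatible lab S \<and> (\<forall>b. card {v \<in> V. lab v = b} = k b))
    \<longleftrightarrow> card S \<le> arc_capacity k"
proof
  assume "\<exists>lab. compatible lab S \<and> (\<forall>b. card {v \<in> V. lab v = b} = k b)"
  then obtain lab where "compatible lab S" and "(\<lambda>b. card {v \<in> V. lab v = b}) = k"
    by auto
  with card_le_arc_capacity[OF assms(1,2)] show "card S \<le> arc_capacity k"
    by metis
qed (rule exists_compatible_labelling[OF assms])

lemma finite_rna_structs: "finite {S. rna_struct n lam r S}"
proof (rule finite_subset)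
  show "{S. rna_struct n lam r S} \<subseteq> Pow ({1..n} \<times> {1..n})"
    using sec_struct_matching_on matching_on_subset unfolding rna_struct_def by blast
qed simp

lemma card_Collect_card_le:
  fixes P :: "'a set \<Rightarrow> bool"
  assumes "finite {S. P S}"
  shows "card {S. P S \<and> card S \<le> m} = (\<Sum>k=0..m. card {S. P S \<and> card S = k})"
proof -
  have "{S. P S \<and> card S \<le> m} = (\<Union>k\<in>{0..m}. {S. P S \<and> card S = k})"
    by auto
  also have "card \<dots> = (\<Sum>k=0..m. card {S. P S \<and> card S = k})"
    using assms by (intro card_UN_disjoint) (auto intro: finite_subset)
  finally show ?thesis .
qed

lemma letter_counts_sum:
  fixes p1 p2 p3 :: real
  assumes "0 \<le> p1" "0 \<le> p2" "0 \<le> p3" "p1 + p2 + p3 \<le> 1"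
  shows "cnt_a p1 n + cnt_u p2 n + cnt_c p3 n + cnt_g p1 p2 p3 n = n"
proof -
  have "real (cnt_a p1 n + cnt_u p2 n + cnt_c p3 n) \<le> (p1 + p2 + p3) * real n"
    using assms unfolding cnt_a_def cnt_u_def cnt_c_def
    by (simp add: distrib_right add_mono of_int_floor_le)
  also have "\<dots> \<le> real n"
    using assms by (simp add: mult_left_le_one_le)
  finally show ?thesis
    unfolding cnt_g_def by linarith
qed

lemma admits_seq_iff_card_le:
  assumes "sec_struct n lam S"
    and "cnt_a p1 n + cnt_u p2 n + cnt_c p3 n + cnt_g p1 p2 p3 n = n"
  shows "admits_seq p1 p2 p3 n S \<longleftrightarrow> card S
    \<le> min (min (cnt_a p1 n) (cnt_u p2 n) + cnt_g p1 p2 p3 n) (min (cnt_c p3 n) (cnt_g p1 p2 p3 n) + cnt_u p2 n)"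
proof -
  define k where "k b = (case b of A \<Rightarrow> cnt_a p1 n | U \<Rightarrow> cnt_u p2 n | C \<Rightarrow> cnt_c p3 n
    | G \<Rightarrow> cnt_g p1 p2 p3 n)" for b
  have "sum k UNIV = card {1..n}"
    using assms(2) by (simp add: sum_UNIV_base k_def)
  from exists_compatible_labelling_iff[OF sec_struct_matching_on[OF assms(1)] _ this]
  have "admits_seq p1 p2 p3 n S \<longleftrightarrow> card S \<le> arc_capacity k"
    unfolding admits_seq_def letter_count_def by (simp add: all_base k_def)
  also have "arc_capacity k
      = min (min (cnt_a p1 n) (cnt_u p2 n) + cnt_g p1 p2 p3 n) (min (cnt_c p3 n) (cnt_g p1 p2 p3 n) + cnt_u p2 n)"
    unfolding arc_capacity_def k_def by simp
  finally show ?thesis .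
qed

theorem mainTheorem7:
  fixes n r lam l :: nat and p1 p2 p3 p4 :: real
  assumes "n \<ge> 1" "r \<ge> 1" "lam \<ge> 1"
    and "0 < p1" "p1 < 1" "0 < p2" "p2 < 1" "0 < p3" "p3 < 1" "0 < p4" "p4 < 1"
    and "p1 + p2 + p3 + p4 = 1"
  defines "a \<equiv> cnt_a p1 n" and "u \<equiv> cnt_u p2 n" and "c \<equiv> cnt_c p3 n"
    and "g \<equiv> cnt_g p1 p2 p3 n"
  defines "l0 \<equiv> min (min a u + g) (min c g + u)"
  shows "sbar_count p1 p2 p3 p4 lam r n l = (if l \<le> l0 then s_count lam r n l else 0)
    \<and> sbar_total p1 p2 p3 p4 lam r n = (\<Sum>k=0..l0. s_count lam r n k)"
proof -
  have "p1 + p2 + p3 \<le> 1"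
    using assms(10,12) by linarith
  then have "cnt_a p1 n + cnt_u p2 n + cnt_c p3 n + cnt_g p1 p2 p3 n = n"
    using assms(4,6,8) by (intro letter_counts_sum) simp_all
  then have admits: "admits_seq p1 p2 p3 n S \<longleftrightarrow> card S \<le> l0" if "rna_struct n lam r S" for S
    using admits_seq_iff_card_le that unfolding rna_struct_def l0_def a_def u_def c_def g_def by blast
  have "{S. rna_struct n lam r S \<and> card S = l \<and> admits_seq p1 p2 p3 n S}
      = (if l \<le> l0 then {S. rna_struct n lam r S \<and> card S = l} else {})"
    using admits by auto
  moreover have "{S. rna_struct n lam r S \<and> admits_seq p1 p2 p3 n S}
      = {S. rna_struct n lam r S \<and> card S \<le> l0}"
    using admits by auto
  ultimately show ?thesis
    using card_Collect_card_le[OF finite_rna_structs]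
    unfolding sbar_count_def sbar_total_def s_count_def by simp
qed

end
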